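(* Let $G$ be a locally compact (Hausdorff) topological group. Then $G$ is approximable by finite $l$-quasigroups, and likewise $G$ is approximable by finite $r$-quasigroups.
   Context: A (finite) $l$-quasigroup is a set $H$ with a binary operation $\odot$ such that for all $a,b\in H$ the equation $a\odot x=b$ has a unique solution $x\in H$; an $r$-quasigroup is defined in the same way with the equation $x\odot a=b$. Approximability: let $C\subseteq G$ be compact, $U$ a neighborhood of the unit of $G$, and $(H,\odot)$ a finite algebra (a set with one binary operation). A set $M\subseteq G$ is a $U$-grid of $C$ if $C\subseteq MU=\{mu: m\in M,u\in U\}$. A map $j:H\to G$ is a $(C,U)$-homomorphism if for all $x,y\in H$ with $j(x),j(y),j(x)j(y)\in C$ one has $j(x\odot y)\in j(x)j(y)U$. The pair $(H,j)$ is a $(C,U)$-approximation of $G$ if $j(H)$ is a $U$-grid of $C$ and $j$ is a $(C,U)$-homomorphism. For a class $\mathcal K$ of finite algebras, $G$ is approximable by systems of $\mathcal K$ if for every compact $C\subseteq G$ and every neighborhood $U$ of the unit there is a $(C,U)$-approximation $(H,j)$ of $G$ with $H\in\mathcal K$ and $j$ injective. *)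

theory Defs
  imports "HOL-Analysis.Analysis"
begin

text \<open>The topological group G is written additively (class topological_group_add,
which extends group_add; group_add is NOT assumed commutative). The unit is 0 and
the product m u is m + u.\<close>

definition algebra_on :: "'h set \<Rightarrow> ('h \<Rightarrow> 'h \<Rightarrow> 'h) \<Rightarrow> bool" where
  "algebra_on H f \<longleftrightarrow> finite H \<and> (\<forall>a\<in>H. \<forall>b\<in>H. f a b \<in> H)"

definition l_quasigroup :: "'h set \<Rightarrow> ('h \<Rightarrow> 'h \<Rightarrow> 'h) \<Rightarrow> bool" where
  "l_quasigroup H f \<longleftrightarrow> algebra_on H f \<and> (\<forall>a\<in>H. \<forall>b\<in>H. \<exists>!x. x \<in> H \<and> f a x = b)"

definition r_quasigroup :: "'h set \<Rightarrow> ('h \<Rightarrow> 'h \<Rightarrow> 'h) \<Rightarrow> bool" where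
  "r_quasigroup H f \<longleftrightarrow> algebra_on H f \<and> (\<forall>a\<in>H. \<forall>b\<in>H. \<exists>!x. x \<in> H \<and> f x a = b)"

definition is_grid :: "'g::group_add set \<Rightarrow> 'g set \<Rightarrow> 'g set \<Rightarrow> bool" where
  "is_grid U C M \<longleftrightarrow> C \<subseteq> {m + u | m u. m \<in> M \<and> u \<in> U}"

definition CU_hom :: "'g::group_add set \<Rightarrow> 'g set \<Rightarrow> 'h set \<Rightarrow> ('h \<Rightarrow> 'h \<Rightarrow> 'h) \<Rightarrow> ('h \<Rightarrow> 'g) \<Rightarrow> bool" where
  "CU_hom C U H f j \<longleftrightarrow> (\<forall>x\<in>H. \<forall>y\<in>H. j x \<in> C \<and> j y \<in> C \<and> j x + j y \<in> C
      \<longrightarrow> j (f x y) \<in> {j x + j y + u | u. u \<in> U})"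

definition CU_approximation :: "'g::group_add set \<Rightarrow> 'g set \<Rightarrow> 'h set \<Rightarrow> ('h \<Rightarrow> 'h \<Rightarrow> 'h) \<Rightarrow> ('h \<Rightarrow> 'g) \<Rightarrow> bool" where
  "CU_approximation C U H f j \<longleftrightarrow> is_grid U C (j ` H) \<and> CU_hom C U H f j"

text \<open>Approximability by systems of a class K of finite algebras. Finite algebras are
represented (up to isomorphism) with carriers H :: nat set.\<close>
definition approximable_by :: "(nat set \<Rightarrow> (nat \<Rightarrow> nat \<Rightarrow> nat) \<Rightarrow> bool) \<Rightarrow> 'g::topological_group_add itself \<Rightarrow> bool" where
  "approximable_by K (TYPE('g)) \<longleftrightarrow>
    (\<forall>(C::'g set) U. compact C \<and> 0 \<in> interior U \<longrightarrow>
       (\<exists>H f j. algebra_on H f \<and> K H f \<and> CU_approximation C U H f j \<and> inj_on j H))"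

end

theory Submission
  imports Defs
begin

(* Choose an open neighbourhood V of 0 inside a compact set K with V - V \<subseteq> U, and a set M of
   minimal cardinality whose left translates m + V cover the compact set C + K.  For fixed a,
   minimality forces Hall's condition for matching every y \<in> M with a + y \<in> C to some m \<in> M with
   -(a + y) + m \<in> U: if a set S of such y had fewer candidates m, replacing S by the translates
   -a + m of its candidates would give a smaller cover.  The matchings extend to permutations of M,
   which serve as the left translations of an l-quasigroup approximating G.  For r-quasigroups, apply
   this to -C and a neighbourhood W whose conjugates -c + -W + c (c \<in> C) lie in U, and reflect the
   operation through inversion: x \<circ> y = -((-y) \<circ>' (-x)). *)

lemma Hall_condition_Diff_critical:
  fixes N :: "'a \<Rightarrow> 'b set"
  assumes Hall: "\<And>S. S \<subseteq> Y \<Longrightarrow> card S \<le> card (\<Union>(N ` S))"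
    and fin: "finite Y" "\<And>S. S \<subseteq> Y \<Longrightarrow> finite (\<Union>(N ` S))"
    and S: "S \<subseteq> Y" "card (\<Union>(N ` S)) = card S"
    and T: "T \<subseteq> Y - S"
  shows "card T \<le> card (\<Union>y\<in>T. N y - \<Union>(N ` S))"
proof -
  have "card (T \<union> S) \<le> card (\<Union>(N ` (T \<union> S)))"
    using T S by (intro Hall) auto
  moreover have "card (T \<union> S) = card T + card S"
    using T S fin(1) by (intro card_Un_disjoint) (auto intro: finite_subset)
  moreover have "(\<Union>y\<in>T. N y - \<Union>(N ` S)) = \<Union>(N ` (T \<union> S)) - \<Union>(N ` S)"
    by auto
  then have "card (\<Union>y\<in>T. N y - \<Union>(N ` S)) = card (\<Union>(N ` (T \<union> S)) - \<Union>(N ` S))"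
    by (rule arg_cong)
  moreover have "card (\<Union>(N ` (T \<union> S)) - \<Union>(N ` S)) = card (\<Union>(N ` (T \<union> S))) - card (\<Union>(N ` S))"
    using T S fin(2) by (intro card_Diff_subset) auto
  ultimately show ?thesis
    using S(2) by linarith
qed

lemma Hall_condition_Diff_point:
  fixes N :: "'a \<Rightarrow> 'b set"
  assumes surplus: "\<And>S. S \<subseteq> Y \<Longrightarrow> S \<noteq> {} \<Longrightarrow> S \<noteq> Y \<Longrightarrow> card S < card (\<Union>(N ` S))"
    and y: "y \<in> Y" and T: "T \<subseteq> Y - {y}"
  shows "card T \<le> card (\<Union>z\<in>T. N z - {m})"
proof (cases "T = {}")
  case False
  with T y have "card T < card (\<Union>(N ` T))"
    by (intro surplus) auto
  moreover have "(\<Union>z\<in>T. N z - {m}) = \<Union>(N ` T) - {m}"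
    by auto
  ultimately show ?thesis
    by (auto simp: card_Diff_singleton_if)
qed simp

lemma distinct_representatives_glue:
  assumes "S \<subseteq> Y"
    and \<phi>1: "inj_on \<phi>1 S" "\<forall>y\<in>S. \<phi>1 y \<in> N y"
    and \<phi>2: "inj_on \<phi>2 (Y - S)" "\<forall>y\<in>Y - S. \<phi>2 y \<in> N y - \<Union>(N ` S)"
  shows "\<exists>\<phi>. inj_on \<phi> Y \<and> (\<forall>y\<in>Y. \<phi> y \<in> N y)"
proof -
  define \<phi> where "\<phi> y = (if y \<in> S then \<phi>1 y else \<phi>2 y)" for y
  have "inj_on \<phi> (S \<union> (Y - S))"
    unfolding inj_on_Un
  proof (intro conjI)
    show "inj_on \<phi> S" "inj_on \<phi> (Y - S)"
      using \<phi>1(1) \<phi>2(1) by (auto simp: \<phi>_def inj_on_def)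
    show "\<phi> ` (S - (Y - S)) \<inter> \<phi> ` (Y - S - S) = {}"
      using \<phi>1(2) \<phi>2(2) by (auto simp: \<phi>_def)
  qed
  moreover have "S \<union> (Y - S) = Y"
    using assms(1) by blast
  ultimately show ?thesis
    using \<phi>1(2) \<phi>2(2) by (auto simp: \<phi>_def)
qed

theorem Hall_marriage:
  fixes N :: "'a \<Rightarrow> 'b set"
  assumes "finite Y" "\<And>S. S \<subseteq> Y \<Longrightarrow> card S \<le> card (\<Union>(N ` S))"
  shows "\<exists>\<phi>. inj_on \<phi> Y \<and> (\<forall>y\<in>Y. \<phi> y \<in> N y)"
  using assms
proof (induction "card Y" arbitrary: Y N rule: less_induct)
  case less
  note fin = less.prems(1) and Hall = less.prems(2)
  have finite_neighbours: "finite (\<Union>(N ` S))" if "S \<subseteq> Y" for S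
  proof (cases "S = {}")
    case False
    then have "0 < card S"
      using that fin by (meson card_gt_0_iff finite_subset)
    then show ?thesis
      using Hall[OF that] by (intro card_ge_0_finite) linarith
  qed simp
  consider (empty) "Y = {}"
    | (critical) S where "S \<subseteq> Y" "S \<noteq> {}" "S \<noteq> Y" "card (\<Union>(N ` S)) = card S"
    | (surplus) y where "y \<in> Y" "\<And>S. S \<subseteq> Y \<Longrightarrow> S \<noteq> {} \<Longrightarrow> S \<noteq> Y \<Longrightarrow> card S < card (\<Union>(N ` S))"
    using Hall by (metis all_not_in_conv le_neq_implies_less)
  then show ?case
  proof cases
    case empty
    then show ?thesis by simp
  next
    case critical
    obtain \<phi>1 where \<phi>1: "inj_on \<phi>1 S" "\<forall>y\<in>S. \<phi>1 y \<in> N y"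
      using less.hyps[of S N] critical(1,3) fin Hall
      by (meson finite_subset psubsetI psubset_card_mono subset_trans)
    have "card (Y - S) < card Y"
      using critical(1,2) fin by (intro psubset_card_mono) auto
    then obtain \<phi>2 where "inj_on \<phi>2 (Y - S)" "\<forall>y\<in>Y - S. \<phi>2 y \<in> N y - \<Union>(N ` S)"
      using less.hyps[of "Y - S" "\<lambda>y. N y - \<Union>(N ` S)"] fin
        Hall_condition_Diff_critical[OF Hall fin finite_neighbours critical(1,4)]
      by auto
    with critical(1) \<phi>1 show ?thesis
      by (rule distinct_representatives_glue)
  next
    case surplus
    obtain m where m: "m \<in> N y"
      using Hall[of "{y}"] surplus(1) by fastforce
    have "card (Y - {y}) < card Y"
      using fin surplus(1) by (rule card_Diff1_less)
    then obtain \<phi>2 where \<phi>2: "inj_on \<phi>2 (Y - {y})" "\<forall>z\<in>Y - {y}. \<phi>2 z \<in> N z - {m}"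
      using less.hyps[of "Y - {y}" "\<lambda>z. N z - {m}"] fin
        Hall_condition_Diff_point[OF surplus(2,1)]
      by auto
    have "inj_on (\<phi>2(y := m)) (insert y (Y - {y}))"
      unfolding inj_on_insert using \<phi>2 by (auto simp: inj_on_def)
    moreover have "insert y (Y - {y}) = Y"
      using surplus(1) by blast
    ultimately show ?thesis
      using \<phi>2(2) m by (intro exI[of _ "\<phi>2(y := m)"]) auto
  qed
qed

lemma inj_on_extend_to_permutation:
  assumes "finite M" "Y \<subseteq> M" "inj_on \<psi> Y" "\<psi> ` Y \<subseteq> M"
  obtains \<pi> where "bij_betw \<pi> M M" "\<And>y. y \<in> Y \<Longrightarrow> \<pi> y = \<psi> y"
proof -
  have "card (M - Y) = card (M - \<psi> ` Y)"
    using assms by (simp add: card_Diff_subset card_image finite_subset)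
  then obtain h where h: "bij_betw h (M - Y) (M - \<psi> ` Y)"
    using assms(1) by (meson finite_Diff finite_same_card_bij)
  define \<pi> where "\<pi> y = (if y \<in> Y then \<psi> y else h y)" for y
  have "bij_betw \<pi> Y (\<psi> ` Y)"
    by (rule bij_betw_cong[THEN iffD1, OF _ bij_betw_imageI[OF assms(3) refl]]) (simp add: \<pi>_def)
  moreover have "bij_betw \<pi> (M - Y) (M - \<psi> ` Y)"
    by (rule bij_betw_cong[THEN iffD1, OF _ h]) (simp add: \<pi>_def)
  ultimately have "bij_betw \<pi> (Y \<union> (M - Y)) (\<psi> ` Y \<union> (M - \<psi> ` Y))"
    by (rule bij_betw_combine) blast
  moreover have "Y \<union> (M - Y) = M" "\<psi> ` Y \<union> (M - \<psi> ` Y) = M"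
    using assms by auto
  ultimately show thesis
    using that by (simp add: \<pi>_def)
qed

lemma bij_betw_iff_unique_solutions:
  assumes "\<And>x. x \<in> H \<Longrightarrow> f x \<in> H"
  shows "bij_betw f H H \<longleftrightarrow> (\<forall>b\<in>H. \<exists>!x. x \<in> H \<and> f x = b)"
proof
  assume bij: "bij_betw f H H"
  show "\<forall>b\<in>H. \<exists>!x. x \<in> H \<and> f x = b"
  proof
    fix b assume "b \<in> H"
    then have "b \<in> f ` H"
      using bij_betw_imp_surj_on[OF bij] by simp
    then obtain x where "x \<in> H" "f x = b"
      by blast
    then show "\<exists>!x. x \<in> H \<and> f x = b"
      using inj_onD[OF bij_betw_imp_inj_on[OF bij]] by blast
  qed
next
  assume unique: "\<forall>b\<in>H. \<exists>!x. x \<in> H \<and> f x = b"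
  show "bij_betw f H H"
  proof (rule bij_betwI')
    fix x y assume "x \<in> H" "y \<in> H"
    moreover have "\<exists>!z. z \<in> H \<and> f z = f x"
      using unique assms \<open>x \<in> H\<close> by simp
    ultimately show "f x = f y \<longleftrightarrow> x = y"
      by (metis (no_types, lifting))
  next
    fix y assume "y \<in> H"
    then have "\<exists>!x. x \<in> H \<and> f x = y"
      using unique by simp
    then show "\<exists>x\<in>H. y = f x"
      by (metis (no_types, lifting))
  qed (rule assms)
qed

lemma l_quasigroup_iff_bij_betw:
  "l_quasigroup H f \<longleftrightarrow> finite H \<and> (\<forall>a\<in>H. bij_betw (f a) H H)"
proof
  assume l: "l_quasigroup H f"
  have "bij_betw (f a) H H" if "a \<in> H" for a
  proof (subst bij_betw_iff_unique_solutions)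
    show "f a x \<in> H" if "x \<in> H" for x
      using l \<open>a \<in> H\<close> that unfolding l_quasigroup_def algebra_on_def by simp
    show "\<forall>b\<in>H. \<exists>!x. x \<in> H \<and> f a x = b"
      using l \<open>a \<in> H\<close> unfolding l_quasigroup_def by simp
  qed
  then show "finite H \<and> (\<forall>a\<in>H. bij_betw (f a) H H)"
    using l unfolding l_quasigroup_def algebra_on_def by simp
next
  assume bij: "finite H \<and> (\<forall>a\<in>H. bij_betw (f a) H H)"
  then have closed: "\<forall>a\<in>H. \<forall>x\<in>H. f a x \<in> H"
    by (auto intro: bij_betw_apply)
  have "\<forall>b\<in>H. \<exists>!x. x \<in> H \<and> f a x = b" if "a \<in> H" for a
    using bij_betw_iff_unique_solutions[of H "f a"] bij closed that by simp
  then show "l_quasigroup H f"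
    using bij closed unfolding l_quasigroup_def algebra_on_def by simp
qed

lemma r_quasigroup_iff_l_quasigroup_flip:
  "r_quasigroup H f \<longleftrightarrow> l_quasigroup H (\<lambda>x y. f y x)"
  by (simp add: r_quasigroup_def l_quasigroup_def algebra_on_def) blast

definition pullback_op :: "'a set \<Rightarrow> ('a \<Rightarrow> 'b) \<Rightarrow> ('b \<Rightarrow> 'b \<Rightarrow> 'b) \<Rightarrow> 'a \<Rightarrow> 'a \<Rightarrow> 'a" where
  "pullback_op H e g x y = inv_into H e (g (e x) (e y))"

lemma
  assumes "bij_betw e H M" "algebra_on M g" "x \<in> H" "y \<in> H"
  shows pullback_op_closed: "pullback_op H e g x y \<in> H"
    and pullback_op_hom: "e (pullback_op H e g x y) = g (e x) (e y)"
proof -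
  have "g (e x) (e y) \<in> e ` H"
    using assms bij_betw_apply unfolding algebra_on_def bij_betw_def by blast
  then show "pullback_op H e g x y \<in> H" "e (pullback_op H e g x y) = g (e x) (e y)"
    unfolding pullback_op_def by (auto intro: inv_into_into f_inv_into_f)
qed

lemma algebra_on_pullback_op:
  assumes "bij_betw e H M" "algebra_on M g"
  shows "algebra_on H (pullback_op H e g)"
  using assms pullback_op_closed bij_betw_finite unfolding algebra_on_def by (metis (no_types))

lemma l_quasigroup_pullback_op:
  assumes e: "bij_betw e H M" and l: "l_quasigroup M g"
  shows "l_quasigroup H (pullback_op H e g)"
  unfolding l_quasigroup_iff_bij_betw
proof (intro conjI ballI)
  show "finite H"
    using e l bij_betw_finite unfolding l_quasigroup_def algebra_on_def by auto
  fix a assume "a \<in> H"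
  then have "bij_betw (g (e a)) M M"
    using e l bij_betw_apply unfolding l_quasigroup_iff_bij_betw by metis
  then have "bij_betw (inv_into H e \<circ> g (e a) \<circ> e) H H"
    using e by (intro bij_betw_trans bij_betw_inv_into)
  then show "bij_betw (pullback_op H e g a) H H"
    by (simp add: pullback_op_def[abs_def] comp_def)
qed

lemma r_quasigroup_pullback_op:
  assumes "bij_betw e H M" "r_quasigroup M g"
  shows "r_quasigroup H (pullback_op H e g)"
proof -
  have "pullback_op H e (\<lambda>x y. g y x) = (\<lambda>x y. pullback_op H e g y x)"
    by (simp add: pullback_op_def fun_eq_iff)
  then show ?thesis
    using assms l_quasigroup_pullback_op[of e H M "\<lambda>x y. g y x"]
    by (simp add: r_quasigroup_iff_l_quasigroup_flip)
qed

lemma CU_approximation_pullback_op: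
  assumes e: "bij_betw e H M" and g: "algebra_on M g" and approx: "CU_approximation C U M g j"
  shows "CU_approximation C U H (pullback_op H e g) (j \<circ> e)"
proof -
  have "e ` H = M"
    using e by (rule bij_betw_imp_surj_on)
  moreover have "e x \<in> M" if "x \<in> H" for x
    using e that by (rule bij_betw_apply)
  ultimately show ?thesis
    using approx pullback_op_hom[OF e g]
    unfolding CU_approximation_def CU_hom_def image_comp[symmetric] by auto
qed

lemma approximable_byI:
  fixes K :: "nat set \<Rightarrow> (nat \<Rightarrow> nat \<Rightarrow> nat) \<Rightarrow> bool"
    and K' :: "'g::topological_group_add set \<Rightarrow> ('g \<Rightarrow> 'g \<Rightarrow> 'g) \<Rightarrow> bool"
  assumes approx: "\<And>C U. compact C \<Longrightarrow> 0 \<in> interior U \<Longrightarrow> \<exists>M g. K' M g \<and> CU_approximation C U M g id"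
    and K'_algebra_on: "\<And>M g. K' M g \<Longrightarrow> algebra_on M g"
    and transfer: "\<And>M g (H :: nat set) e. K' M g \<Longrightarrow> bij_betw e H M \<Longrightarrow> K H (pullback_op H e g)"
  shows "approximable_by K TYPE('g)"
  unfolding approximable_by_def
proof (intro allI impI)
  fix C U :: "'g set"
  assume "compact C \<and> 0 \<in> interior U"
  then obtain M g where K': "K' M g" and approx: "CU_approximation C U M g id"
    using approx by blast
  have alg: "algebra_on M g"
    using K' by (rule K'_algebra_on)
  then obtain e :: "nat \<Rightarrow> 'g" where e: "bij_betw e {0..<card M} M"
    unfolding algebra_on_def using ex_bij_betw_nat_finite by blast
  have "CU_approximation C U {0..<card M} (pullback_op {0..<card M} e g) e"
    using CU_approximation_pullback_op[OF e alg approx] by simp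
  then show "\<exists>H f j. algebra_on H f \<and> K H f \<and> CU_approximation C U H f j \<and> inj_on j H"
    using algebra_on_pullback_op[OF e alg] transfer[OF K' e] bij_betw_imp_inj_on[OF e] by blast
qed

lemma zero_nbhd_diff_subset:
  fixes U :: "'g::topological_group_add set"
  assumes "0 \<in> interior U"
  obtains V where "open V" "0 \<in> V" "\<And>v w. v \<in> V \<Longrightarrow> w \<in> V \<Longrightarrow> v + -w \<in> U"
proof -
  have "open ((\<lambda>p. fst p + - snd p) -` interior U)"
    by (intro open_vimage open_interior continuous_intros)
  moreover have "(0, 0) \<in> (\<lambda>p. fst p + - snd p) -` interior U"
    using assms by simp
  ultimately obtain A B where AB: "open A" "open B" "(0, 0) \<in> A \<times> B"
    "A \<times> B \<subseteq> (\<lambda>p. fst p + - snd p) -` interior U"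
    by (rule open_prod_elim)
  show thesis
  proof
    show "open (A \<inter> B)" "0 \<in> A \<inter> B"
      using AB by auto
    show "v + -w \<in> U" if "v \<in> A \<inter> B" "w \<in> A \<inter> B" for v w
      using AB(4) that interior_subset by fastforce
  qed
qed

lemma locally_compact_zero_nbhd_diff_subset:
  fixes U :: "'g::topological_group_add set"
  assumes "locally_compact_space (euclidean :: 'g topology)" "0 \<in> interior U"
  obtains V K where "open V" "0 \<in> V" "compact K" "V \<subseteq> K"
    "\<And>v w. v \<in> V \<Longrightarrow> w \<in> V \<Longrightarrow> v + -w \<in> U"
proof -
  obtain V1 K :: "'g set" where V1: "open V1" "compact K" "0 \<in> V1" "V1 \<subseteq> K"
    using assms(1) unfolding locally_compact_space_def
    by (metis UNIV_I compactin_euclidean_iff open_openin topspace_euclidean)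
  obtain V0 where V0: "open V0" "0 \<in> V0" "\<And>v w. v \<in> V0 \<Longrightarrow> w \<in> V0 \<Longrightarrow> v + -w \<in> U"
    using zero_nbhd_diff_subset[OF assms(2)] by blast
  show thesis
    by (rule that[of "V1 \<inter> V0" K]) (use V1 V0 in auto)
qed

lemma zero_nbhd_conjugates_subset:
  fixes C U :: "'g::topological_group_add set"
  assumes "compact C" "0 \<in> interior U"
  obtains W where "open W" "0 \<in> W" "\<And>c w. c \<in> C \<Longrightarrow> w \<in> W \<Longrightarrow> -c + -w + c \<in> U"
proof -
  have "open ((\<lambda>p. - snd p + - fst p + snd p) -` interior U)"
    by (intro open_vimage open_interior continuous_intros)
  moreover have "{0} \<times> C \<subseteq> (\<lambda>p. - snd p + - fst p + snd p) -` interior U"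
    using assms(2) by auto
  ultimately have "\<exists>W. 0 \<in> W \<and> open W \<and> W \<times> C \<subseteq> (\<lambda>p. - snd p + - fst p + snd p) -` interior U"
    by (rule Elementary_Topology.tube_lemma[OF assms(1)])
  then obtain W where W: "0 \<in> W" "open W"
    "W \<times> C \<subseteq> (\<lambda>p. - snd p + - fst p + snd p) -` interior U"
    by blast
  show thesis
  proof (rule that)
    show "-c + -w + c \<in> U" if "c \<in> C" "w \<in> W" for c w
      using W(3) that interior_subset by fastforce
  qed (use W in auto)
qed

definition left_cover :: "'g::group_add set \<Rightarrow> 'g set \<Rightarrow> 'g set \<Rightarrow> bool" where
  "left_cover V D M \<longleftrightarrow> finite M \<and> (\<forall>x\<in>D. \<exists>m\<in>M. -m + x \<in> V)"

lemma minimal_left_cover_exists: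
  fixes V D :: "'g::topological_group_add set"
  assumes "compact D" "open V" "0 \<in> V"
  obtains M where "left_cover V D M" "\<And>M'. left_cover V D M' \<Longrightarrow> card M \<le> card M'"
proof -
  have "open ((\<lambda>y. -m + y) -` V)" for m
    by (intro open_vimage assms(2) continuous_intros)
  moreover have "D \<subseteq> (\<Union>m\<in>D. (\<lambda>y. -m + y) -` V)"
    using assms(3) by auto
  ultimately obtain M0 where "finite M0" "D \<subseteq> (\<Union>m\<in>M0. (\<lambda>y. -m + y) -` V)"
    using compactE_image[OF assms(1)] by metis
  then have "left_cover V D M0"
    unfolding left_cover_def by blast
  then show thesis
    using ex_has_least_nat[of "left_cover V D" M0 card] that by blast
qed

lemma left_cover_exchange:
  fixes a :: "'g::group_add"
  assumes cover: "left_cover V D M"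
    and sum_in: "\<And>c v. c \<in> C \<Longrightarrow> v \<in> V \<Longrightarrow> c + v \<in> D"
    and diff_in: "\<And>v w. v \<in> V \<Longrightarrow> w \<in> V \<Longrightarrow> v + -w \<in> U"
    and S: "\<And>y. y \<in> S \<Longrightarrow> a + y \<in> C"
  shows "left_cover V D ((M - S) \<union> (\<lambda>m. -a + m) ` {m \<in> M. \<exists>y\<in>S. -(a + y) + m \<in> U})"
    (is "left_cover V D ?M'")
  unfolding left_cover_def
proof (intro conjI ballI)
  show "finite ?M'"
    using cover unfolding left_cover_def by simp
  fix x assume "x \<in> D"
  then obtain m where m: "m \<in> M" "-m + x \<in> V"
    using cover unfolding left_cover_def by blast
  show "\<exists>m'\<in>?M'. -m' + x \<in> V"
  proof (cases "m \<in> S")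
    case False
    then show ?thesis
      using m by blast
  next
    case True
    then have "(a + m) + (-m + x) \<in> D"
      using m(2) by (intro sum_in S)
    then obtain m2 where m2: "m2 \<in> M" "-m2 + (a + x) \<in> V"
      using cover unfolding left_cover_def by (auto simp: add.assoc)
    have "(-m + x) + -(-m2 + (a + x)) \<in> U"
      using m(2) m2(2) by (rule diff_in)
    moreover have "(-m + x) + -(-m2 + (a + x)) = -(a + m) + m2"
      by (simp only: minus_add add.assoc minus_minus add_minus_cancel)
    ultimately have "-a + m2 \<in> ?M'"
      using True m2(1) by auto
    moreover have "-(-a + m2) + x = -m2 + (a + x)"
      by (simp only: minus_add minus_minus add.assoc)
    ultimately show ?thesis
      using m2(2) by (metis (no_types))
  qed
qed

lemma minimal_left_cover_Hall_condition:
  fixes a :: "'g::group_add"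
  assumes cover: "left_cover V D M" and minimal: "\<And>M'. left_cover V D M' \<Longrightarrow> card M \<le> card M'"
    and sum_in: "\<And>c v. c \<in> C \<Longrightarrow> v \<in> V \<Longrightarrow> c + v \<in> D"
    and diff_in: "\<And>v w. v \<in> V \<Longrightarrow> w \<in> V \<Longrightarrow> v + -w \<in> U"
    and S: "S \<subseteq> M" "\<And>y. y \<in> S \<Longrightarrow> a + y \<in> C"
  shows "card S \<le> card {m \<in> M. \<exists>y\<in>S. -(a + y) + m \<in> U}"
proof (rule ccontr)
  define NS where "NS = {m \<in> M. \<exists>y\<in>S. -(a + y) + m \<in> U}"
  assume "\<not> ?thesis"
  then have "card NS < card S"
    unfolding NS_def by simp
  have finite: "finite M" "finite S" "finite NS"
    using cover S(1) unfolding left_cover_def NS_def by (auto intro: finite_subset)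
  have "card ((M - S) \<union> (\<lambda>m. -a + m) ` NS) \<le> card (M - S) + card NS"
    using card_Un_le card_image_le[OF finite(3)] by (meson add_left_mono order_trans)
  also have "\<dots> < card (M - S) + card S"
    using \<open>card NS < card S\<close> by simp
  also have "\<dots> = card M"
    using S(1) finite by (simp add: card_Diff_subset card_mono)
  finally have "card ((M - S) \<union> (\<lambda>m. -a + m) ` NS) < card M" .
  moreover have "left_cover V D ((M - S) \<union> (\<lambda>m. -a + m) ` NS)"
    unfolding NS_def using cover sum_in diff_in S(2) by (rule left_cover_exchange)
  ultimately show False
    using minimal by (simp add: not_le[symmetric])
qed

lemma minimal_left_cover_permutation:
  fixes a :: "'g::group_add"
  assumes cover: "left_cover V D M" and minimal: "\<And>M'. left_cover V D M' \<Longrightarrow> card M \<le> card M'"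
    and sum_in: "\<And>c v. c \<in> C \<Longrightarrow> v \<in> V \<Longrightarrow> c + v \<in> D"
    and diff_in: "\<And>v w. v \<in> V \<Longrightarrow> w \<in> V \<Longrightarrow> v + -w \<in> U"
  obtains \<pi> where "bij_betw \<pi> M M" "\<And>y. y \<in> M \<Longrightarrow> a + y \<in> C \<Longrightarrow> -(a + y) + \<pi> y \<in> U"
proof -
  define Y where "Y = {y \<in> M. a + y \<in> C}"
  define N where "N y = {m \<in> M. -(a + y) + m \<in> U}" for y
  have "finite M"
    using cover unfolding left_cover_def by blast
  then have "finite Y"
    unfolding Y_def by simp
  moreover have "card S \<le> card (\<Union>(N ` S))" if "S \<subseteq> Y" for S
  proof -
    have "\<Union>(N ` S) = {m \<in> M. \<exists>y\<in>S. -(a + y) + m \<in> U}"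
      unfolding N_def by blast
    then show ?thesis
      using minimal_left_cover_Hall_condition[where C = C, OF cover minimal sum_in diff_in, of S a] that
      unfolding Y_def by auto
  qed
  ultimately obtain \<psi> where \<psi>: "inj_on \<psi> Y" "\<forall>y\<in>Y. \<psi> y \<in> N y"
    using Hall_marriage by blast
  moreover have "Y \<subseteq> M" "\<psi> ` Y \<subseteq> M"
    using \<psi>(2) unfolding Y_def N_def by auto
  ultimately obtain \<pi> where "bij_betw \<pi> M M" "\<And>y. y \<in> Y \<Longrightarrow> \<pi> y = \<psi> y"
    using inj_on_extend_to_permutation[OF \<open>finite M\<close>] by metis
  then show thesis
    using that \<psi>(2) unfolding Y_def N_def by auto
qed

lemma CU_approximation_id_iff:
  fixes M :: "'g::group_add set"
  shows "CU_approximation C U M g id \<longleftrightarrow>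
    (\<forall>c\<in>C. \<exists>m\<in>M. -m + c \<in> U) \<and>
    (\<forall>x\<in>M. \<forall>y\<in>M. x \<in> C \<and> y \<in> C \<and> x + y \<in> C \<longrightarrow> -(x + y) + g x y \<in> U)"
proof -
  have coset: "(\<exists>u. z = x + u \<and> u \<in> U) \<longleftrightarrow> -x + z \<in> U" for x z :: 'g
    by (metis add_minus_cancel minus_add_cancel)
  have grid: "(\<exists>m u. c = m + u \<and> m \<in> M \<and> u \<in> U) \<longleftrightarrow> (\<exists>m\<in>M. -m + c \<in> U)" for c
    using coset by blast
  show ?thesis
    unfolding CU_approximation_def is_grid_def CU_hom_def id_def image_ident mem_Collect_eq coset subset_iff grid
    by blast
qed

lemma l_quasigroup_approximation:
  fixes C U :: "'g::topological_group_add set"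
  assumes lc: "locally_compact_space (euclidean :: 'g topology)"
    and C: "compact C" and U: "0 \<in> interior U"
  shows "\<exists>M g. l_quasigroup M g \<and> CU_approximation C U M g id"
proof -
  obtain V K where V: "open V" "0 \<in> V" "compact K" "V \<subseteq> K"
    and diff_in: "\<And>v w. v \<in> V \<Longrightarrow> w \<in> V \<Longrightarrow> v + -w \<in> U"
    using locally_compact_zero_nbhd_diff_subset[OF lc U] by blast
  define D where "D = (\<lambda>p. fst p + snd p) ` (C \<times> K)"
  have "compact D"
    unfolding D_def by (intro compact_continuous_image compact_Times C V(3) continuous_intros)
  then obtain M where cover: "left_cover V D M"
    and minimal: "\<And>M'. left_cover V D M' \<Longrightarrow> card M \<le> card M'"
    using minimal_left_cover_exists V(1,2) by blast
  have sum_in: "c + v \<in> D" if "c \<in> C" "v \<in> V" for c v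
    using that V(4) unfolding D_def by (intro image_eqI[of _ _ "(c, v)"]) auto
  have "\<forall>a. \<exists>\<pi>. bij_betw \<pi> M M \<and> (\<forall>y\<in>M. a + y \<in> C \<longrightarrow> -(a + y) + \<pi> y \<in> U)"
    using minimal_left_cover_permutation[where C = C, OF cover minimal sum_in diff_in] by metis
  then obtain g where g: "\<And>a. bij_betw (g a) M M"
    and g_near: "\<And>a y. y \<in> M \<Longrightarrow> a + y \<in> C \<Longrightarrow> -(a + y) + g a y \<in> U"
    by metis
  have "l_quasigroup M g"
    using cover g unfolding left_cover_def by (simp add: l_quasigroup_iff_bij_betw)
  moreover have "\<exists>m\<in>M. -m + c \<in> U" if "c \<in> C" for c
  proof -
    have "c + 0 \<in> D"
      using that V(2) by (rule sum_in)
    then obtain m where "m \<in> M" "-m + c \<in> V"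
      using cover unfolding left_cover_def by auto
    then show ?thesis
      using diff_in[OF _ V(2)] by fastforce
  qed
  ultimately show ?thesis
    using g_near unfolding CU_approximation_id_iff by blast
qed

lemma r_quasigroup_reflect:
  fixes g :: "'g::group_add \<Rightarrow> 'g \<Rightarrow> 'g"
  assumes l: "l_quasigroup M g"
  shows "r_quasigroup (uminus ` M) (\<lambda>x y. - g (-y) (-x))"
proof -
  have neg: "bij_betw uminus (uminus ` M) M" "bij_betw uminus M (uminus ` M)"
    by (auto intro!: bij_betw_imageI inj_onI simp: image_image)
  have "bij_betw (uminus \<circ> g (-a) \<circ> uminus) (uminus ` M) (uminus ` M)" if "a \<in> uminus ` M" for a
  proof -
    have "bij_betw (g (-a)) M M"
      using l that by (auto simp: l_quasigroup_iff_bij_betw)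
    then show ?thesis
      using neg by (intro bij_betw_trans)
  qed
  moreover have "finite (uminus ` M)"
    using l unfolding l_quasigroup_def algebra_on_def by simp
  ultimately show ?thesis
    by (simp add: r_quasigroup_iff_l_quasigroup_flip l_quasigroup_iff_bij_betw comp_def)
qed

lemma r_quasigroup_approximation:
  fixes C U :: "'g::topological_group_add set"
  assumes lc: "locally_compact_space (euclidean :: 'g topology)"
    and C: "compact C" and U: "0 \<in> interior U"
  shows "\<exists>M g. r_quasigroup M g \<and> CU_approximation C U M g id"
proof -
  obtain W where W: "open W" "0 \<in> W" and conj_in: "\<And>c w. c \<in> C \<Longrightarrow> w \<in> W \<Longrightarrow> -c + -w + c \<in> U"
    using zero_nbhd_conjugates_subset[OF C U] by blast
  have "compact (uminus ` C)"
    by (intro compact_continuous_image C continuous_intros)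
  moreover have "0 \<in> interior W"
    using W by (simp add: interior_open)
  ultimately obtain M' g' where l: "l_quasigroup M' g'"
    and approx: "CU_approximation (uminus ` C) W M' g' id"
    using l_quasigroup_approximation[OF lc] by blast
  note grid' = approx[unfolded CU_approximation_id_iff, THEN conjunct1, rule_format]
    and hom' = approx[unfolded CU_approximation_id_iff, THEN conjunct2, rule_format]
  define M where "M = uminus ` M'"
  define g where "g x y = - g' (-y) (-x)" for x y
  have "r_quasigroup M g"
    unfolding M_def g_def using l by (rule r_quasigroup_reflect)
  moreover have "\<exists>m\<in>M. -m + c \<in> U" if "c \<in> C" for c
  proof -
    have "-c \<in> uminus ` C"
      using that by (rule imageI)
    then have "\<exists>m'\<in>M'. -m' + -c \<in> W"
      by (rule grid')
    then obtain m' where "m' \<in> M'" "-m' + -c \<in> W"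
      by blast
    moreover have "-c + -(-m' + -c) + c = -(-m') + c"
      by (simp only: minus_add minus_minus add.assoc minus_add_cancel)
    ultimately show ?thesis
      using conj_in[OF that] unfolding M_def by (metis image_eqI)
  qed
  moreover have "-(x + y) + g x y \<in> U" if "x \<in> M" "y \<in> M" "x \<in> C" "y \<in> C" "x + y \<in> C" for x y
  proof -
    have "-y \<in> M'" "-x \<in> M'"
      using that(1,2) unfolding M_def by auto
    moreover have "-y + -x \<in> uminus ` C"
      unfolding minus_add[symmetric] using that(5) by (rule imageI)
    ultimately have "-(-y + -x) + g' (-y) (-x) \<in> W"
      using that(3,4) by (intro hom') auto
    moreover have "-(x + y) + -(-(-y + -x) + g' (-y) (-x)) + (x + y) = -(x + y) + g x y"
      unfolding g_def by (simp only: minus_add minus_minus add.assoc minus_add_cancel left_minus add_0_right)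
    ultimately show ?thesis
      using conj_in[OF that(5)] by metis
  qed
  ultimately show ?thesis
    unfolding CU_approximation_id_iff by blast
qed

theorem theorem1:
  assumes "locally_compact_space (euclidean :: ('g::{topological_group_add, t2_space}) topology)"
  shows "approximable_by l_quasigroup TYPE('g) \<and> approximable_by r_quasigroup TYPE('g)"
proof
  show "approximable_by l_quasigroup TYPE('g)"
  proof (rule approximable_byI)
    show "\<exists>M g. l_quasigroup M g \<and> CU_approximation C U M g id"
      if "compact C" "0 \<in> interior U" for C U :: "'g set"
      using assms that by (rule l_quasigroup_approximation)
    show "algebra_on M g" if "l_quasigroup M g" for M :: "'g set" and g
      using that unfolding l_quasigroup_def by blast
    show "l_quasigroup H (pullback_op H e g)"
      if "l_quasigroup M g" "bij_betw e H M" for M :: "'g set" and g and H :: "nat set" and e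
      using that(2,1) by (rule l_quasigroup_pullback_op)
  qed
  show "approximable_by r_quasigroup TYPE('g)"
  proof (rule approximable_byI)
    show "\<exists>M g. r_quasigroup M g \<and> CU_approximation C U M g id"
      if "compact C" "0 \<in> interior U" for C U :: "'g set"
      using assms that by (rule r_quasigroup_approximation)
    show "algebra_on M g" if "r_quasigroup M g" for M :: "'g set" and g
      using that unfolding r_quasigroup_def by blast
    show "r_quasigroup H (pullback_op H e g)"
      if "r_quasigroup M g" "bij_betw e H M" for M :: "'g set" and g and H :: "nat set" and e
      using that(2,1) by (rule r_quasigroup_pullback_op)
  qed
qed

end
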